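(* Let $(y_\beta)_{\beta>0}\subset\mathcal M$ be such that $(\beta y_\beta)$ converges vaguely on $[0,1)$ to some function $\alpha$ and $$L:=\lim_{\beta\to\infty}\int_0^1\beta y_\beta(s)ds<\infty.$$ Assume there exist $v_\beta\in[0,1)$ with $y_\beta(v_\beta)=1$ for all $\beta>0$ such that $\delta:=\lim_{\beta\to\infty}\beta(1-v_\beta)\in(0,\infty)$. Then $$\lim_{\beta\to\infty}\frac{\mathcal Q_\beta(y_\beta)}\beta=\frac12\Big((\xi'(1)+h^2)L-\int_0^1\xi''(q)\Big(\int_0^q\alpha(s)ds\Big)dq+\int_0^1\frac{dq}{L-\int_0^q\alpha(s)ds}\Big).$$
   Context: Let $(\gamma_p)_{p\ge2}$ be real with $\sum_{p\ge2}2^p\gamma_p^2<\infty$, $h\in\mathbb R$, $\xi(s)=\sum_{p\ge2}\gamma_p^2s^p$; for $\beta>0$, $\xi_\beta=\beta^2\xi$, $h_\beta=\beta h$. $\mathcal M$ is the set of distribution functions $x$ on $[0,1]$ with $x(\hat q)=1$ for some $\hat q<1$; for $x\in\mathcal M$, $\hat x(q)=\int_q^1x(s)ds$ and $\mathcal Q_\beta(x)=\frac12\big(\int_0^1(\xi'_\beta(q)+h_\beta^2)x(q)dq+\int_0^{\hat q}\frac{dq}{\hat x(q)}+\log(1-\hat q)\big)$, for any $\hat q<1$ with $x(\hat q)=1$ (independent of the choice). Vague convergence of $\beta y_\beta$ to $\alpha$ on $[0,1)$ means $\beta y_\beta(s)\to\alpha(s)$ at every continuity point $s\in[0,1)$ of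 $\alpha$. *)

theory Defs
  imports "HOL-Analysis.Analysis"
begin

definition xi :: "(nat \<Rightarrow> real) \<Rightarrow> real \<Rightarrow> real" where
  "xi \<gamma> s = (\<Sum>p. (if 2 \<le> p then (\<gamma> p)\<^sup>2 * s ^ p else 0))"

definition inM :: "(real \<Rightarrow> real) \<Rightarrow> bool" where
  "inM x \<longleftrightarrow> mono_on {0..1} x \<and> (\<forall>s\<in>{0..1}. 0 \<le> x s \<and> x s \<le> 1)
     \<and> (\<forall>s\<in>{0..<1}. continuous (at_right s) x) \<and> x 1 = 1
     \<and> (\<exists>q. 0 \<le> q \<and> q < 1 \<and> x q = 1)"

definition xhat :: "(real \<Rightarrow> real) \<Rightarrow> real \<Rightarrow> real" where
  "xhat x q = integral {q..1} x"

text \<open>Q_beta(x); the value does not depend on the choice of qhat, we pick one by SOME.\<close>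
definition Qbeta :: "(nat \<Rightarrow> real) \<Rightarrow> real \<Rightarrow> real \<Rightarrow> (real \<Rightarrow> real) \<Rightarrow> real" where
  "Qbeta \<gamma> h \<beta> x =
    (let qh = (SOME q. 0 \<le> q \<and> q < 1 \<and> x q = 1) in
     (1/2) * (integral {0..1} (\<lambda>q. (\<beta>\<^sup>2 * deriv (xi \<gamma>) q + (\<beta> * h)\<^sup>2) * x q)
              + integral {0..qh} (\<lambda>q. 1 / xhat x q) + ln (1 - qh)))"

definition vague_conv :: "(real \<Rightarrow> real \<Rightarrow> real) \<Rightarrow> (real \<Rightarrow> real) \<Rightarrow> bool" where
  "vague_conv y \<alpha> \<longleftrightarrow> (\<forall>s\<in>{0..<1}. continuous (at s within {0..<1}) \<alpha> \<longrightarrow>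
       ((\<lambda>\<beta>. \<beta> * y \<beta> s) \<longlongrightarrow> \<alpha> s) at_top)"

end

theory Submission
  imports Defs
begin

text \<open>Write \<open>f = \<beta> y\<^sub>\<beta>\<close> and \<open>F(q) = \<integral>\<^sub>0\<^sup>q f\<close>. Integration by parts turns the energy term of
  \<open>Q\<^sub>\<beta>(y\<^sub>\<beta>) / \<beta>\<close> into \<open>(\<xi>'(1) + h\<^sup>2) F(1) - \<integral>\<^sub>0\<^sup>1 \<xi>''(q) F(q) dq\<close>, and the entropy term,
  evaluated at \<open>q = v\<^sub>\<beta>\<close>, is \<open>\<integral>\<^sub>0\<^sup>v dq / (F(1) - F(q)) + ln (1 - v\<^sub>\<beta>) / \<beta>\<close>.
  Since \<open>y\<^sub>\<beta>\<close> is nondecreasing, \<open>f(s) (1 - s) \<le> F(1)\<close>, so \<open>f\<close> is uniformly bounded on each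
  \<open>[0, q]\<close> with \<open>q < 1\<close>, and dominated convergence (off the countably many discontinuities of
  the monotone \<open>\<alpha>\<close>) gives \<open>F(q) \<rightarrow> \<integral>\<^sub>0\<^sup>q \<alpha>\<close>. On \<open>[0, v\<^sub>\<beta>]\<close> the denominators
  \<open>F(1) - F(q)\<close> stay above \<open>\<beta> (1 - v\<^sub>\<beta>) \<rightarrow> \<delta> > 0\<close>, which bounds the entropy integrand
  uniformly and forces \<open>ln (1 - v\<^sub>\<beta>) / \<beta> \<rightarrow> 0\<close>.\<close>

lemma indefinite_integral_diff:
  fixes g :: "real \<Rightarrow> real"
  assumes "g integrable_on {a..b}" "a \<le> x" "x \<le> y" "y \<le> b"
  shows "integral {a..y} g - integral {a..x} g = integral {x..y} g"
proof -
  have "g integrable_on {a..y}"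
    using assms by (auto intro: integrable_subinterval_real)
  with assms show ?thesis
    using Henstock_Kurzweil_Integration.integral_combine[of a x y g] by auto
qed

lemma eq_if_increment_bound:
  fixes D F :: "real \<Rightarrow> real"
  assumes "a \<le> b" and F: "continuous_on {a..b} F"
    and bound: "\<And>x y. x \<in> {a..b} \<Longrightarrow> y \<in> {a..b} \<Longrightarrow> x \<le> y \<Longrightarrow>
      \<bar>D y - D x\<bar> \<le> C * (y - x) * \<bar>F y - F x\<bar>"
  shows "D b = D a"
proof -
  have sym_bound: "\<bar>D y - D x\<bar> \<le> \<bar>C\<bar> * \<bar>y - x\<bar> * \<bar>F y - F x\<bar>"
    if "x \<in> {a..b}" "y \<in> {a..b}" for x y
  proof (cases "x \<le> y")
    case True
    have "C * (y - x) \<le> \<bar>C\<bar> * \<bar>y - x\<bar>" by (simp add: abs_mult[symmetric])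
    then show ?thesis
      using bound[OF that True] by (smt (verit) abs_ge_zero mult_right_mono)
  next
    case False
    have "C * (x - y) \<le> \<bar>C\<bar> * \<bar>y - x\<bar>" by (metis abs_ge_self abs_minus_commute abs_mult)
    then show ?thesis
      using bound[OF that(2,1)] False
      by (smt (verit) abs_ge_zero abs_minus_commute mult_right_mono)
  qed
  have zero_derivative: "(D has_derivative (\<lambda>_. 0)) (at x within {a..b})" if x: "x \<in> {a..b}" for x
    unfolding has_derivative_iff_norm
  proof (intro conjI)
    have "((\<lambda>y. \<bar>C\<bar> * \<bar>F y - F x\<bar>) \<longlongrightarrow> \<bar>C\<bar> * \<bar>F x - F x\<bar>) (at x within {a..b})"
      using F x by (intro tendsto_intros) (simp add: continuous_on_def)
    then have "((\<lambda>y. \<bar>C\<bar> * \<bar>F y - F x\<bar>) \<longlongrightarrow> 0) (at x within {a..b})"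
      by simp
    moreover have "\<forall>\<^sub>F y in at x within {a..b}.
        norm (norm (D y - D x - 0) / norm (y - x)) \<le> \<bar>C\<bar> * \<bar>F y - F x\<bar>"
      unfolding eventually_at_filter
      by (intro always_eventually allI impI)
         (use sym_bound x in \<open>simp add: divide_le_eq algebra_simps\<close>)
    ultimately show "((\<lambda>y. norm (D y - D x - 0) / norm (y - x)) \<longlongrightarrow> 0) (at x within {a..b})"
      by (rule Lim_null_comparison[rotated])
  qed simp
  have "continuous_on {a..b} D"
    using zero_derivative has_derivative_continuous continuous_on_eq_continuous_within by blast
  then show ?thesis
    using zero_derivative \<open>a \<le> b\<close>
    by (intro has_derivative_zero_unique_strong_interval[of "{}" a b D "D a" b]) auto
qed

lemma integrable_continuous_mult_nonneg:
  fixes u f :: "real \<Rightarrow> real"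
  assumes u: "continuous_on {a..b} u"
    and f: "f integrable_on {a..b}" and f_nonneg: "\<And>t. t \<in> {a..b} \<Longrightarrow> 0 \<le> f t"
  shows "(\<lambda>t. u t * f t) integrable_on {a..b}"
proof -
  have "(\<lambda>t. u t * f t) absolutely_integrable_on {a..b}"
  proof (rule absolutely_integrable_bounded_measurable_product_real)
    show "u \<in> borel_measurable (lebesgue_on {a..b})"
      by (rule continuous_imp_measurable_on_sets_lebesgue[OF u]) auto
    show "bounded (u ` {a..b})"
      using compact_continuous_image[OF u] compact_imp_bounded by auto
    show "f absolutely_integrable_on {a..b}"
      using nonnegative_absolutely_integrable_1[OF f] f_nonneg by auto
  qed auto
  then show ?thesis
    using absolutely_integrable_on_def by blast
qed

text \<open>Nonnegativity of \<open>f\<close> replaces differentiability of \<open>\<integral>f\<close>: the by-parts defect \<open>D\<close> below has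
  increments of order \<open>(y - x) (F y - F x)\<close>, hence zero derivative, because \<open>F\<close> is continuous.\<close>

lemma integration_by_parts_indefinite_integral:
  fixes u u' f :: "real \<Rightarrow> real"
  assumes "a \<le> b"
    and u: "\<And>t. t \<in> {a..b} \<Longrightarrow> (u has_real_derivative u' t) (at t)"
    and u': "continuous_on {a..b} u'"
    and f: "f integrable_on {a..b}" and f_nonneg: "\<And>t. t \<in> {a..b} \<Longrightarrow> 0 \<le> f t"
  shows "integral {a..b} (\<lambda>t. u t * f t)
    = u b * integral {a..b} f - integral {a..b} (\<lambda>t. u' t * integral {a..t} f)"
proof -
  define F where "F t = integral {a..t} f" for t
  have F: "continuous_on {a..b} F"
    unfolding F_def by (rule indefinite_integral_continuous_1[OF f])
  have u_cont: "continuous_on {a..b} u"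
    using u by (meson DERIV_isCont continuous_at_imp_continuous_on)
  obtain M where M: "\<And>t. t \<in> {a..b} \<Longrightarrow> \<bar>u' t\<bar> \<le> M"
    using compact_continuous_image[OF u'] compact_imp_bounded bounded_real
    by (metis compact_Icc image_eqI)
  have M_nonneg: "0 \<le> M"
    using M[of a] \<open>a \<le> b\<close> by auto
  have u_lipschitz: "\<bar>u s - u t\<bar> \<le> M * \<bar>s - t\<bar>" if "s \<in> {a..b}" "t \<in> {a..b}" for s t
    using field_differentiable_bound[of "{a..b}" u u' M s t] u M that
    by (auto intro: has_field_derivative_at_within)
  have uf: "(\<lambda>t. u t * f t) integrable_on {a..b}"
    using u_cont f f_nonneg by (rule integrable_continuous_mult_nonneg)
  have u'F: "(\<lambda>t. u' t * F t) integrable_on {a..b}"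
    by (intro integrable_continuous_real continuous_on_mult u' F)
  have F_diff: "F y - F x = integral {x..y} f" if "a \<le> x" "x \<le> y" "y \<le> b" for x y
    unfolding F_def using indefinite_integral_diff[OF f that] .
  have F_mono: "F x \<le> F y" if "a \<le> x" "x \<le> y" "y \<le> b" for x y
    using F_diff[OF that] integral_nonneg[of f "{x..y}"] f_nonneg that
      integrable_subinterval_real[OF f, of x y] by fastforce
  define D where "D x = integral {a..x} (\<lambda>t. u t * f t) - u x * F x + integral {a..x} (\<lambda>t. u' t * F t)" for x
  have "D b = D a"
  proof (rule eq_if_increment_bound[OF \<open>a \<le> b\<close> F])
    fix x y assume "x \<in> {a..b}" "y \<in> {a..b}" "x \<le> y"
    then have xy: "a \<le> x" "x \<le> y" "y \<le> b" and sub: "{x..y} \<subseteq> {a..b}" by auto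
    have f_xy: "f integrable_on {x..y}" and uf_xy: "(\<lambda>t. u t * f t) integrable_on {x..y}"
      and u'F_xy: "(\<lambda>t. u' t * F t) integrable_on {x..y}"
      using integrable_subinterval_real[OF _ sub] f uf u'F by blast+
    have u'_xy: "u' integrable_on {x..y}"
      using integrable_continuous_real continuous_on_subset[OF u' sub] by blast
    have ftc: "integral {x..y} u' = u y - u x"
      using u sub xy
      by (intro integral_unique fundamental_theorem_of_calculus)
         (auto simp: has_real_derivative_iff_has_vector_derivative intro: has_vector_derivative_at_within)
    have increment: "D y - D x = integral {x..y} (\<lambda>t. (u t - u y) * f t)
        + integral {x..y} (\<lambda>t. u' t * (F t - F x))"
      using integral_diff[OF uf_xy integrable_on_mult_right[OF f_xy, of "u y"]]
        integral_diff[OF u'F_xy integrable_on_mult_left[OF u'_xy, of "F x"]]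
        indefinite_integral_diff[OF uf xy] indefinite_integral_diff[OF u'F xy] F_diff[OF xy] ftc
      by (simp add: D_def algebra_simps)
    have "\<bar>integral {x..y} (\<lambda>t. (u t - u y) * f t)\<bar> \<le> integral {x..y} (\<lambda>t. M * (y - x) * f t)"
    proof -
      have "\<bar>(u t - u y) * f t\<bar> \<le> M * (y - x) * f t" if "t \<in> {x..y}" for t
        using u_lipschitz[of t y] f_nonneg[of t] that sub M_nonneg
        by (auto simp: abs_mult intro!: mult_right_mono order.trans[OF _ mult_left_mono[of "y - t"]])
      moreover have "(\<lambda>t. (u t - u y) * f t) integrable_on {x..y}"
        unfolding left_diff_distrib by (intro integrable_diff uf_xy integrable_on_mult_right f_xy)
      ultimately have "norm (integral {x..y} (\<lambda>t. (u t - u y) * f t))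
          \<le> integral {x..y} (\<lambda>t. M * (y - x) * f t)"
        by (intro integral_norm_bound_integral integrable_on_mult_right f_xy) auto
      then show ?thesis by simp
    qed
    also have "\<dots> = M * (y - x) * (F y - F x)"
      using F_diff[OF xy] by simp
    finally have first: "\<bar>integral {x..y} (\<lambda>t. (u t - u y) * f t)\<bar> \<le> M * (y - x) * (F y - F x)" .
    have "\<bar>integral {x..y} (\<lambda>t. u' t * (F t - F x))\<bar> \<le> integral {x..y} (\<lambda>t. M * (F y - F x))"
    proof -
      have "\<bar>u' t * (F t - F x)\<bar> \<le> M * (F y - F x)" if "t \<in> {x..y}" for t
        using M[of t] F_mono[of x t] F_mono[of t y] that xy
        by (auto simp: abs_mult intro!: mult_mono)
      moreover have "(\<lambda>t. u' t * (F t - F x)) integrable_on {x..y}"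
        unfolding right_diff_distrib by (intro integrable_diff u'F_xy integrable_on_mult_left u'_xy)
      ultimately have "norm (integral {x..y} (\<lambda>t. u' t * (F t - F x)))
          \<le> integral {x..y} (\<lambda>t. M * (F y - F x))"
        by (intro integral_norm_bound_integral) auto
      then show ?thesis by simp
    qed
    also have "\<dots> = M * (y - x) * (F y - F x)"
      using xy by simp
    finally have second: "\<bar>integral {x..y} (\<lambda>t. u' t * (F t - F x))\<bar> \<le> M * (y - x) * (F y - F x)" .
    show "\<bar>D y - D x\<bar> \<le> 2 * M * (y - x) * \<bar>F y - F x\<bar>"
      using increment first second F_mono[OF xy] by (simp add: algebra_simps)
  qed
  then show ?thesis
    by (simp add: D_def F_def)
qed

lemma negligible_countable:
  fixes S :: "real set"
  assumes "countable S"
  shows "negligible S"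
proof -
  have "negligible (\<Union>x\<in>S. {x})"
    using assms by (intro negligible_countable_Union) auto
  then show ?thesis by simp
qed

lemma dominated_convergence_at_top:
  fixes f :: "real \<Rightarrow> real \<Rightarrow> real" and g h :: "real \<Rightarrow> real"
  assumes N: "negligible N"
    and f: "eventually (\<lambda>k. f k integrable_on S) at_top"
    and h: "h integrable_on S"
    and bound: "eventually (\<lambda>k. \<forall>x\<in>S-N. \<bar>f k x\<bar> \<le> h x) at_top"
    and lim: "\<And>x. x \<in> S-N \<Longrightarrow> ((\<lambda>k. f k x) \<longlongrightarrow> g x) at_top"
  shows "((\<lambda>k. integral S (f k)) \<longlongrightarrow> integral S g) at_top"
proof (rule tendsto_at_topI_sequentially)
  fix X :: "nat \<Rightarrow> real"
  assume X: "filterlim X at_top sequentially"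
  have "eventually (\<lambda>k. f k integrable_on S \<and> (\<forall>x\<in>S-N. \<bar>f k x\<bar> \<le> h x)) at_top"
    using f bound by (rule eventually_conj)
  then have "eventually (\<lambda>n. f (X n) integrable_on S \<and> (\<forall>x\<in>S-N. \<bar>f (X n) x\<bar> \<le> h x)) sequentially"
    using X unfolding filterlim_iff by blast
  then obtain K where K: "\<And>n. n \<ge> K \<Longrightarrow> f (X n) integrable_on S \<and> (\<forall>x\<in>S-N. \<bar>f (X n) x\<bar> \<le> h x)"
    by (auto simp: eventually_sequentially)
  \<comment> \<open>Zero everything out on \<open>N\<close>, so that the bounds hold everywhere on \<open>S\<close>.\<close>
  define cut where "cut \<phi> x = (if x \<in> N then 0 else \<phi> x)" for \<phi> :: "real \<Rightarrow> real" and x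
  have integral_cut: "integral S (cut \<phi>) = integral S \<phi>" for \<phi>
    by (rule integral_spike[OF N]) (auto simp: cut_def)
  have "(\<lambda>n. integral S (cut (f (X (n + K))))) \<longlonglongrightarrow> integral S (cut g)"
  proof (rule dominated_convergence(2)[where f = "\<lambda>n. cut (f (X (n + K)))" and h = "cut h"])
    show "cut (f (X (n + K))) integrable_on S" for n
      by (rule integrable_spike[OF conjunct1[OF K[of "n + K"]] N]) (auto simp: cut_def)
    show "cut h integrable_on S"
      by (rule integrable_spike[OF h N]) (auto simp: cut_def)
    show "norm (cut (f (X (n + K))) x) \<le> cut h x" if "x \<in> S" for n x
      using K[of "n + K"] that by (auto simp: cut_def)
    show "(\<lambda>n. cut (f (X (n + K))) x) \<longlonglongrightarrow> cut g x" if "x \<in> S" for x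
    proof (cases "x \<in> N")
      case False
      then have "(\<lambda>n. f (X n) x) \<longlonglongrightarrow> g x"
        using filterlim_compose[OF lim[of x] X] that by auto
      then have "(\<lambda>n. f (X (n + K)) x) \<longlonglongrightarrow> g x"
        by (rule LIMSEQ_ignore_initial_segment)
      with False show ?thesis
        by (simp add: cut_def)
    qed (simp add: cut_def)
  qed
  then show "(\<lambda>n. integral S (f (X n))) \<longlonglongrightarrow> integral S g"
    unfolding integral_cut by (rule LIMSEQ_offset)
qed

definition power_series :: "(nat \<Rightarrow> real) \<Rightarrow> real \<Rightarrow> real" where
  "power_series c x = (\<Sum>n. c n * x ^ n)"

lemma power_series_has_real_derivative:
  assumes "\<And>x. \<bar>x\<bar> < R \<Longrightarrow> summable (\<lambda>n. c n * x ^ n)" and "\<bar>x\<bar> < R"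
  shows "(power_series c has_real_derivative power_series (diffs c) x) (at x)"
proof -
  define K where "K = (\<bar>x\<bar> + R) / 2"
  have "summable (\<lambda>n. c n * K ^ n)" "norm x < norm K"
    using assms by (auto simp: K_def)
  then show ?thesis
    unfolding power_series_def[abs_def] by (rule termdiffs_strong)
qed

lemma summable_diffs_power_series:
  fixes x :: real
  assumes "\<And>x. \<bar>x\<bar> < R \<Longrightarrow> summable (\<lambda>n. c n * x ^ n)" and "\<bar>x\<bar> < R"
  shows "summable (\<lambda>n. diffs c n * x ^ n)"
  using assms by (intro termdiff_converges[of x R]) auto

definition xi_coeff :: "(nat \<Rightarrow> real) \<Rightarrow> nat \<Rightarrow> real" where
  "xi_coeff \<gamma> p = (if 2 \<le> p then (\<gamma> p)\<^sup>2 else 0)"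

lemma xi_eq_power_series: "xi \<gamma> = power_series (xi_coeff \<gamma>)"
  by (auto simp: xi_def power_series_def xi_coeff_def fun_eq_iff intro!: suminf_cong)

lemma summable_xi_coeff:
  assumes gamma: "summable (\<lambda>p. 2 ^ p * (\<gamma> p)\<^sup>2)" and "\<bar>x\<bar> \<le> 2"
  shows "summable (\<lambda>p. xi_coeff \<gamma> p * x ^ p)"
proof (rule summable_comparison_test[OF _ gamma], intro exI allI impI)
  fix p :: nat
  have "\<bar>x\<bar> ^ p \<le> 2 ^ p"
    using assms by (intro power_mono) auto
  then show "norm (xi_coeff \<gamma> p * x ^ p) \<le> 2 ^ p * (\<gamma> p)\<^sup>2"
    by (auto simp: xi_coeff_def abs_mult power_abs mult.commute intro: mult_right_mono)
qed

lemma deriv_xi_has_real_derivative: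
  assumes gamma: "summable (\<lambda>p. 2 ^ p * (\<gamma> p)\<^sup>2)" and t: "\<bar>t\<bar> < 2"
  shows "(deriv (xi \<gamma>) has_real_derivative deriv (deriv (xi \<gamma>)) t) (at t)"
    and "isCont (deriv (deriv (xi \<gamma>))) t"
proof -
  define c where "c = xi_coeff \<gamma>"
  have c0: "summable (\<lambda>n. c n * x ^ n)" if "\<bar>x\<bar> < 2" for x
    using summable_xi_coeff[OF gamma] that by (simp add: c_def)
  have c1: "summable (\<lambda>n. diffs c n * x ^ n)" if "\<bar>x\<bar> < 2" for x
    using summable_diffs_power_series[OF c0 that] .
  have c2: "summable (\<lambda>n. diffs (diffs c) n * x ^ n)" if "\<bar>x\<bar> < 2" for x
    using summable_diffs_power_series[OF c1 that] .
  have deriv1: "deriv (xi \<gamma>) x = power_series (diffs c) x" if "\<bar>x\<bar> < 2" for x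
    using power_series_has_real_derivative[OF c0 that]
    by (simp add: xi_eq_power_series c_def DERIV_imp_deriv)
  \<comment> \<open>The series identities hold on the open interval \<open>(-2, 2)\<close>, hence transfer to derivatives there.\<close>
  have has_deriv2: "(deriv (xi \<gamma>) has_real_derivative power_series (diffs (diffs c)) x) (at x)"
    if x: "\<bar>x\<bar> < 2" for x
    by (rule has_field_derivative_transform_within_open
        [OF power_series_has_real_derivative[OF c1 x], of "{-2<..<2}"])
       (use x deriv1 in auto)
  have deriv2: "deriv (deriv (xi \<gamma>)) x = power_series (diffs (diffs c)) x" if "\<bar>x\<bar> < 2" for x
    using has_deriv2[OF that] by (rule DERIV_imp_deriv)
  show "(deriv (xi \<gamma>) has_real_derivative deriv (deriv (xi \<gamma>)) t) (at t)"
    using has_deriv2[OF t] deriv2[OF t] by simp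
  have "isCont (power_series (diffs (diffs c))) t"
    using power_series_has_real_derivative[OF c2 t] by (rule DERIV_isCont)
  moreover have "eventually (\<lambda>x. power_series (diffs (diffs c)) x = deriv (deriv (xi \<gamma>)) x) (nhds t)"
    using t deriv2 by (intro eventually_nhds_in_open[of "{-2<..<2}", THEN eventually_mono]) auto
  ultimately show "isCont (deriv (deriv (xi \<gamma>))) t"
    using isCont_cong by blast
qed

lemma continuous_on_deriv2_xi:
  assumes "summable (\<lambda>p. 2 ^ p * (\<gamma> p)\<^sup>2)"
  shows "continuous_on {0..1} (deriv (deriv (xi \<gamma>)))"
  using deriv_xi_has_real_derivative(2)[OF assms] by (intro continuous_at_imp_continuous_on) auto

lemma integral_deriv_xi_mult:
  assumes gamma: "summable (\<lambda>p. 2 ^ p * (\<gamma> p)\<^sup>2)"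
    and f: "f integrable_on {0..1}" "\<And>t. t \<in> {0..1} \<Longrightarrow> 0 \<le> f t"
  shows "integral {0..1} (\<lambda>q. (deriv (xi \<gamma>) q + c) * f q)
    = (deriv (xi \<gamma>) 1 + c) * integral {0..1} f
      - integral {0..1} (\<lambda>q. deriv (deriv (xi \<gamma>)) q * integral {0..q} f)"
proof (rule integration_by_parts_indefinite_integral[OF _ _ continuous_on_deriv2_xi[OF gamma] f])
  show "((\<lambda>q. deriv (xi \<gamma>) q + c) has_real_derivative deriv (deriv (xi \<gamma>)) t) (at t)"
    if "t \<in> {0..1}" for t
    using DERIV_add[OF deriv_xi_has_real_derivative(1)[OF gamma] DERIV_const] that by simp
qed simp

lemma inM_mono: "inM x \<Longrightarrow> a \<in> {0..1} \<Longrightarrow> b \<in> {0..1} \<Longrightarrow> a \<le> b \<Longrightarrow> x a \<le> x b"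
  unfolding inM_def mono_on_def by blast

lemma inM_bounds: "inM x \<Longrightarrow> s \<in> {0..1} \<Longrightarrow> 0 \<le> x s \<and> x s \<le> 1"
  unfolding inM_def by blast

lemma inM_integrable:
  assumes "inM x" "0 \<le> a" "b \<le> 1"
  shows "x integrable_on {a..b}"
proof -
  have "x integrable_on {0..1}"
    using assms(1) unfolding inM_def by (blast intro: integrable_on_mono_on)
  then show ?thesis
    by (rule integrable_subinterval_real) (use assms in auto)
qed

lemma xhat_eq_one_minus:
  assumes x: "inM x" and a: "0 \<le> a" "x a = 1" and q: "a \<le> q" "q \<le> 1"
  shows "xhat x q = 1 - q"
proof -
  have "x t = 1" if "t \<in> {q..1}" for t
    using inM_mono[OF x, of a t] inM_bounds[OF x, of t] that a q by auto
  then have "xhat x q = integral {q..1} (\<lambda>_. 1::real)"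
    unfolding xhat_def by (rule integral_cong)
  then show ?thesis using q by simp
qed

lemma xhat_antimono:
  assumes x: "inM x" and "0 \<le> p" "p \<le> q" "q \<le> 1"
  shows "xhat x q \<le> xhat x p"
proof -
  have "integral {p..q} x + integral {q..1} x = integral {p..1} x"
    by (rule Henstock_Kurzweil_Integration.integral_combine) (use assms inM_integrable[OF x] in auto)
  moreover have "0 \<le> integral {p..q} x"
    by (rule integral_nonneg) (use assms inM_integrable[OF x] inM_bounds[OF x] in auto)
  ultimately show ?thesis
    unfolding xhat_def by linarith
qed

lemma xhat_ge:
  assumes x: "inM x" and a: "a < 1" "x a = 1" and q: "0 \<le> q" "q \<le> a"
  shows "1 - a \<le> xhat x q"
  using xhat_antimono[OF x q a(1)[THEN less_imp_le]] xhat_eq_one_minus[OF x _ a(2), of a] q a(1)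
  by auto

lemma continuous_on_xhat:
  assumes x: "inM x"
  shows "continuous_on {0..1} (xhat x)"
proof -
  have "continuous_on {0..1} (\<lambda>q. integral {0..1} x - integral {0..q} x)"
    by (intro continuous_intros indefinite_integral_continuous_1 inM_integrable[OF x]) auto
  moreover have "integral {0..1} x - integral {0..q} x = xhat x q" if "q \<in> {0..1}" for q
    using indefinite_integral_diff[OF inM_integrable[OF x order_refl order_refl], of q 1] that
    by (simp add: xhat_def)
  ultimately show ?thesis
    by (rule continuous_on_eq)
qed

text \<open>The last two terms of \<open>Qbeta\<close> do not depend on the choice of \<open>qh\<close>: past a point
  where \<open>x = 1\<close>, \<open>xhat x q = 1 - q\<close> and \<open>1 / (1 - q)\<close> integrates to \<open>- ln (1 - q)\<close>.\<close>

lemma integral_inverse_xhat_plus_ln_eq: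
  assumes x: "inM x" and a: "0 \<le> a" "x a = 1" and b: "a \<le> b" "b < 1"
  shows "integral {0..a} (\<lambda>q. 1 / xhat x q) + ln (1 - a)
    = integral {0..b} (\<lambda>q. 1 / xhat x q) + ln (1 - b)"
proof -
  have "x b = 1"
    using inM_mono[OF x, of a b] inM_bounds[OF x, of b] a b by auto
  then have xhat_pos: "0 < xhat x q" if "q \<in> {0..b}" for q
    using xhat_ge[OF x b(2)] that b by fastforce
  have inverse_integrable: "(\<lambda>q. 1 / xhat x q) integrable_on {0..b}"
  proof (intro integrable_continuous_real continuous_on_divide continuous_on_const)
    show "continuous_on {0..b} (xhat x)"
      using continuous_on_subset[OF continuous_on_xhat[OF x], of "{0..b}"] b by simp
  qed (use xhat_pos in force)
  have "integral {0..b} (\<lambda>q. 1 / xhat x q)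
      = integral {0..a} (\<lambda>q. 1 / xhat x q) + integral {a..b} (\<lambda>q. 1 / xhat x q)"
    using Henstock_Kurzweil_Integration.integral_combine[OF _ _ inverse_integrable, of a] a b by simp
  also have "integral {a..b} (\<lambda>q. 1 / xhat x q) = integral {a..b} (\<lambda>q. 1 / (1 - q))"
    by (rule integral_cong) (use xhat_eq_one_minus[OF x a] b in auto)
  also have "\<dots> = (- ln (1 - b)) - (- ln (1 - a))"
  proof (rule integral_unique, rule fundamental_theorem_of_calculus)
    fix t assume "t \<in> {a..b}"
    then have "((\<lambda>q. - ln (1 - q)) has_real_derivative 1 / (1 - t)) (at t within {a..b})"
      using b by (auto intro!: derivative_eq_intros simp: field_simps)
    then show "((\<lambda>q. - ln (1 - q)) has_vector_derivative 1 / (1 - t)) (at t within {a..b})"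
      by (simp add: has_real_derivative_iff_has_vector_derivative)
  qed (use b in auto)
  finally show ?thesis by simp
qed

lemma Qbeta_eq:
  assumes x: "inM x" and w: "0 \<le> w" "w < 1" "x w = 1"
  shows "Qbeta \<gamma> h \<beta> x = (1/2) * (integral {0..1} (\<lambda>q. (\<beta>\<^sup>2 * deriv (xi \<gamma>) q + (\<beta> * h)\<^sup>2) * x q)
    + integral {0..w} (\<lambda>q. 1 / xhat x q) + ln (1 - w))"
proof -
  define qh where "qh = (SOME q. 0 \<le> q \<and> q < 1 \<and> x q = 1)"
  have qh: "0 \<le> qh" "qh < 1" "x qh = 1"
    using someI_ex[of "\<lambda>q. 0 \<le> q \<and> q < 1 \<and> x q = 1"] x by (auto simp: inM_def qh_def)
  have tail: "integral {0..qh} (\<lambda>q. 1 / xhat x q) + ln (1 - qh)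
      = integral {0..w} (\<lambda>q. 1 / xhat x q) + ln (1 - w)"
  proof (cases "qh \<le> w")
    case True
    show ?thesis using integral_inverse_xhat_plus_ln_eq[OF x qh(1,3) True w(2)] .
  next
    case False
    then have "w \<le> qh" by simp
    from integral_inverse_xhat_plus_ln_eq[OF x w(1,3) this qh(2)] show ?thesis
      by (rule sym)
  qed
  have "Qbeta \<gamma> h \<beta> x = (1/2) * (integral {0..1} (\<lambda>q. (\<beta>\<^sup>2 * deriv (xi \<gamma>) q + (\<beta> * h)\<^sup>2) * x q)
    + (integral {0..qh} (\<lambda>q. 1 / xhat x q) + ln (1 - qh)))"
    unfolding Qbeta_def Let_def qh_def by (simp only: add.assoc)
  also note tail
  finally show ?thesis
    by (simp only: add.assoc)
qed

locale vague_scaling =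
  fixes y :: "real \<Rightarrow> real \<Rightarrow> real" and \<alpha> v :: "real \<Rightarrow> real" and L \<delta> :: real
  assumes yM: "\<forall>\<beta>>0. inM (y \<beta>)"
    and alpha_mono: "mono_on {0..<1} \<alpha>"
    and vague: "vague_conv y \<alpha>"
    and L: "((\<lambda>\<beta>. integral {0..1} (\<lambda>s. \<beta> * y \<beta> s)) \<longlongrightarrow> L) at_top"
    and v: "\<forall>\<beta>>0. 0 \<le> v \<beta> \<and> v \<beta> < 1 \<and> y \<beta> (v \<beta>) = 1"
    and delta: "((\<lambda>\<beta>. \<beta> * (1 - v \<beta>)) \<longlongrightarrow> \<delta>) at_top" and delta_pos: "0 < \<delta>"
begin

abbreviation Y :: "real \<Rightarrow> real \<Rightarrow> real" where
  "Y \<beta> q \<equiv> integral {0..q} (\<lambda>s. \<beta> * y \<beta> s)"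

lemma scaled_integrable: "\<beta> > 0 \<Longrightarrow> 0 \<le> a \<Longrightarrow> b \<le> 1 \<Longrightarrow> (\<lambda>s. \<beta> * y \<beta> s) integrable_on {a..b}"
  using inM_integrable yM by (auto intro: integrable_on_mult_right)

lemma scaled_nonneg: "\<beta> > 0 \<Longrightarrow> s \<in> {0..1} \<Longrightarrow> 0 \<le> \<beta> * y \<beta> s"
  using inM_bounds yM by simp

lemma Y_tail:
  assumes "\<beta> > 0" "q \<in> {0..1}"
  shows "Y \<beta> 1 - Y \<beta> q = \<beta> * xhat (y \<beta>) q"
  using indefinite_integral_diff[OF scaled_integrable[OF assms(1) order_refl order_refl], of q 1] assms
  by (simp add: xhat_def)

lemma Y_nonneg: "\<beta> > 0 \<Longrightarrow> q \<in> {0..1} \<Longrightarrow> 0 \<le> Y \<beta> q"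
  using scaled_integrable scaled_nonneg by (intro integral_nonneg) auto

lemma Y_le_total:
  assumes "\<beta> > 0" "q \<in> {0..1}"
  shows "Y \<beta> q \<le> Y \<beta> 1"
proof -
  have "0 \<le> xhat (y \<beta>) q"
    unfolding xhat_def using inM_integrable inM_bounds yM assms by (intro integral_nonneg) auto
  then show ?thesis
    using Y_tail[OF assms] assms(1) by (metis diff_ge_0_iff_ge mult_nonneg_nonneg less_imp_le)
qed

lemma continuous_on_Y: "\<beta> > 0 \<Longrightarrow> continuous_on {0..1} (Y \<beta>)"
  using scaled_integrable by (intro indefinite_integral_continuous_1) auto

lemma scaled_le_Y_total:
  assumes "\<beta> > 0" "s \<in> {0..1}"
  shows "\<beta> * y \<beta> s * (1 - s) \<le> Y \<beta> 1"
proof -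
  have "\<beta> * y \<beta> s * (1 - s) = integral {s..1} (\<lambda>_. \<beta> * y \<beta> s)"
    using assms by simp
  also have "\<dots> \<le> integral {s..1} (\<lambda>t. \<beta> * y \<beta> t)"
    using assms scaled_integrable[OF assms(1), of s 1] inM_mono[of "y \<beta>" s] yM
    by (intro integral_le) (auto intro!: mult_left_mono)
  also have "\<dots> = Y \<beta> 1 - Y \<beta> s"
    using indefinite_integral_diff[OF scaled_integrable[OF assms(1) order_refl order_refl], of s 1] assms
    by simp
  also have "\<dots> \<le> Y \<beta> 1"
    using Y_nonneg assms by simp
  finally show ?thesis .
qed

lemma tail_gap_le:
  assumes "\<beta> > 0" "q \<in> {0..v \<beta>}"
  shows "\<beta> * (1 - v \<beta>) \<le> Y \<beta> 1 - Y \<beta> q"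
proof -
  have "1 - v \<beta> \<le> xhat (y \<beta>) q"
    using xhat_ge yM v assms by auto
  then have "\<beta> * (1 - v \<beta>) \<le> \<beta> * xhat (y \<beta>) q"
    using assms(1) by simp
  also have "\<dots> = Y \<beta> 1 - Y \<beta> q"
  proof -
    have "q \<in> {0..1}"
      using v assms by auto
    then show ?thesis
      using Y_tail[OF assms(1)] by simp
  qed
  finally show ?thesis .
qed

lemma eventually_gt_v: "q < 1 \<Longrightarrow> eventually (\<lambda>\<beta>. q < v \<beta>) at_top"
proof -
  assume "q < 1"
  have "((\<lambda>\<beta>. (\<beta> * (1 - v \<beta>)) * inverse \<beta>) \<longlongrightarrow> \<delta> * 0) at_top"
    by (intro tendsto_mult delta tendsto_inverse_0_at_top filterlim_ident)
  moreover have "eventually (\<lambda>\<beta>. (\<beta> * (1 - v \<beta>)) * inverse \<beta> = 1 - v \<beta>) at_top"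
    using eventually_gt_at_top[of 0] by eventually_elim simp
  ultimately have "((\<lambda>\<beta>. 1 - v \<beta>) \<longlongrightarrow> 0) at_top"
    by (simp add: tendsto_cong)
  then have "eventually (\<lambda>\<beta>. 1 - v \<beta> < 1 - q) at_top"
    using \<open>q < 1\<close> by (intro order_tendstoD(2)) auto
  then show ?thesis
    by eventually_elim simp
qed

lemma eventually_Y_total_lt: "eventually (\<lambda>\<beta>. Y \<beta> 1 < L + 1) at_top"
  using L by (intro order_tendstoD(2)) auto

lemma tendsto_Y:
  assumes q: "0 \<le> q" "q < 1"
  shows "((\<lambda>\<beta>. Y \<beta> q) \<longlongrightarrow> integral {0..q} \<alpha>) at_top"
proof -
  define disc where "disc = {s \<in> {0..<1}. \<not> continuous (at s within {0..<1}) \<alpha>}"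
  have "negligible disc"
    unfolding disc_def by (intro negligible_countable mono_on_ctble_discont alpha_mono)
  moreover have "eventually (\<lambda>\<beta>. \<forall>s\<in>{0..q} - disc. \<bar>\<beta> * y \<beta> s\<bar> \<le> (L + 1) / (1 - q)) at_top"
    using eventually_gt_at_top[of 0] eventually_Y_total_lt
  proof eventually_elim
    case (elim \<beta>)
    show ?case
    proof
      fix s assume "s \<in> {0..q} - disc"
      then have s: "s \<in> {0..1}" "s \<le> q" using q by auto
      have "\<beta> * y \<beta> s * (1 - q) \<le> \<beta> * y \<beta> s * (1 - s)"
        using scaled_nonneg[OF elim(1) s(1)] s by (intro mult_left_mono) auto
      also have "\<dots> \<le> L + 1"
        using scaled_le_Y_total[OF elim(1) s(1)] elim(2) by simp
      finally show "\<bar>\<beta> * y \<beta> s\<bar> \<le> (L + 1) / (1 - q)"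
        using scaled_nonneg[OF elim(1) s(1)] q by (simp add: pos_le_divide_eq)
    qed
  qed
  moreover have "((\<lambda>\<beta>. \<beta> * y \<beta> s) \<longlongrightarrow> \<alpha> s) at_top" if "s \<in> {0..q} - disc" for s
    using vague that q unfolding vague_conv_def disc_def by auto
  ultimately show ?thesis
    using scaled_integrable q
    by (intro dominated_convergence_at_top[where h = "\<lambda>_. (L + 1) / (1 - q)"])
       (auto intro: eventually_mono[OF eventually_gt_at_top[of 0]])
qed

lemma tendsto_integral_mult_Y:
  assumes g: "continuous_on {0..1} g"
  shows "((\<lambda>\<beta>. integral {0..1} (\<lambda>q. g q * Y \<beta> q))
    \<longlongrightarrow> integral {0..1} (\<lambda>q. g q * integral {0..q} \<alpha>)) at_top"
proof -
  obtain M where M: "\<And>t. t \<in> {0..1} \<Longrightarrow> \<bar>g t\<bar> \<le> M"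
    using compact_continuous_image[OF g] compact_imp_bounded bounded_real
    by (metis compact_Icc image_eqI)
  have M_nonneg: "0 \<le> M"
    using M[of 0] abs_ge_zero[of "g 0"] by fastforce
  have "eventually (\<lambda>\<beta>. \<forall>q\<in>{0..1} - {1}. \<bar>g q * Y \<beta> q\<bar> \<le> M * (L + 1)) at_top"
    using eventually_gt_at_top[of 0] eventually_Y_total_lt
  proof eventually_elim
    case (elim \<beta>)
    have "\<bar>g q\<bar> * \<bar>Y \<beta> q\<bar> \<le> M * (L + 1)" if "q \<in> {0..1}" for q
    proof (rule mult_mono)
      show "\<bar>Y \<beta> q\<bar> \<le> L + 1"
        using Y_nonneg[OF elim(1) that] Y_le_total[OF elim(1) that] elim(2) by simp
    qed (use M M_nonneg that in auto)
    then show ?case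
      by (simp add: abs_mult del: integral_mult_right)
  qed
  moreover have "eventually (\<lambda>\<beta>. (\<lambda>q. g q * Y \<beta> q) integrable_on {0..1}) at_top"
    using eventually_gt_at_top[of 0]
    by eventually_elim (intro integrable_continuous_real continuous_on_mult g continuous_on_Y)
  ultimately show ?thesis
    using tendsto_Y
    by (intro dominated_convergence_at_top[where N = "{1}" and h = "\<lambda>_. M * (L + 1)"])
       (auto intro: tendsto_mult_left)
qed

lemma eventually_gap: "eventually (\<lambda>\<beta>. \<beta> > 0 \<and> \<delta> / 2 < \<beta> * (1 - v \<beta>)) at_top"
proof -
  have "eventually (\<lambda>\<beta>. \<delta> / 2 < \<beta> * (1 - v \<beta>)) at_top"
    using delta delta_pos by (intro order_tendstoD(1)) auto
  then show ?thesis
    using eventually_gt_at_top[of 0] by eventually_elim simp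
qed

lemma gap_lt_tail:
  assumes "\<beta> > 0" "\<delta> / 2 < \<beta> * (1 - v \<beta>)" "q \<in> {0..v \<beta>}"
  shows "\<delta> / 2 < Y \<beta> 1 - Y \<beta> q"
  using tail_gap_le[OF assms(1,3)] assms(2) by linarith

lemma tendsto_inverse_tail:
  assumes q: "0 \<le> q" "q < 1"
  shows "((\<lambda>\<beta>. 1 / (Y \<beta> 1 - Y \<beta> q)) \<longlongrightarrow> 1 / (L - integral {0..q} \<alpha>)) at_top"
proof -
  have lim: "((\<lambda>\<beta>. Y \<beta> 1 - Y \<beta> q) \<longlongrightarrow> L - integral {0..q} \<alpha>) at_top"
    by (intro tendsto_diff L tendsto_Y q)
  have "eventually (\<lambda>\<beta>. (\<beta> > 0 \<and> \<delta> / 2 < \<beta> * (1 - v \<beta>)) \<and> q < v \<beta>) at_top"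
    using eventually_gap eventually_gt_v[OF q(2)] by (rule eventually_conj)
  then have "eventually (\<lambda>\<beta>. \<delta> / 2 \<le> Y \<beta> 1 - Y \<beta> q) at_top"
    by eventually_elim (use gap_lt_tail q in \<open>fastforce intro: less_imp_le\<close>)
  then have "\<delta> / 2 \<le> L - integral {0..q} \<alpha>"
    by (rule tendsto_lowerbound[OF lim]) simp
  then show ?thesis
    using delta_pos by (intro tendsto_divide tendsto_const lim) auto
qed

lemma tendsto_integral_inverse_tail:
  "((\<lambda>\<beta>. integral {0..v \<beta>} (\<lambda>q. 1 / (Y \<beta> 1 - Y \<beta> q)))
    \<longlongrightarrow> integral {0..1} (\<lambda>q. 1 / (L - integral {0..q} \<alpha>))) at_top"
proof -
  define G where "G \<beta> q = (if q \<in> {..v \<beta>} then 1 / (Y \<beta> 1 - Y \<beta> q) else 0)" for \<beta> q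
  have domain: "{..v \<beta>} \<inter> {0..1} = {0..v \<beta>}" if "\<beta> > 0" for \<beta>
    using v that by auto
  have "((\<lambda>\<beta>. integral {0..1} (G \<beta>)) \<longlongrightarrow> integral {0..1} (\<lambda>q. 1 / (L - integral {0..q} \<alpha>))) at_top"
  proof (rule dominated_convergence_at_top[where N = "{1}" and h = "\<lambda>_. 2 / \<delta>"])
    show "eventually (\<lambda>\<beta>. G \<beta> integrable_on {0..1}) at_top"
      using eventually_gap
    proof eventually_elim
      case (elim \<beta>)
      have "continuous_on {0..v \<beta>} (Y \<beta>)"
        by (rule continuous_on_subset[OF continuous_on_Y[OF conjunct1[OF elim]]]) (use v elim in auto)
      moreover have "Y \<beta> 1 - Y \<beta> q \<noteq> 0" if "q \<in> {0..v \<beta>}" for q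
        using gap_lt_tail[of \<beta> q] elim that delta_pos by fastforce
      ultimately have "continuous_on {0..v \<beta>} (\<lambda>q. 1 / (Y \<beta> 1 - Y \<beta> q))"
        by (intro continuous_intros) auto
      then show ?case
        unfolding G_def integrable_restrict_Int domain[OF conjunct1[OF elim]]
        by (rule integrable_continuous_real)
    qed
    show "eventually (\<lambda>\<beta>. \<forall>q\<in>{0..1} - {1}. \<bar>G \<beta> q\<bar> \<le> 2 / \<delta>) at_top"
      using eventually_gap
    proof eventually_elim
      case (elim \<beta>)
      have inverse_bound: "\<bar>1 / d\<bar> \<le> 2 / \<delta>" if "\<delta> / 2 < d" for d :: real
        using that delta_pos by (auto simp: divide_simps)
      have "\<bar>1 / (Y \<beta> 1 - Y \<beta> q)\<bar> \<le> 2 / \<delta>" if "q \<in> {0..v \<beta>}" for q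
        using inverse_bound gap_lt_tail[of \<beta> q] elim that by blast
      then show ?case
        using delta_pos by (auto simp: G_def)
    qed
    show "((\<lambda>\<beta>. G \<beta> q) \<longlongrightarrow> 1 / (L - integral {0..q} \<alpha>)) at_top" if "q \<in> {0..1} - {1}" for q
    proof -
      have q: "0 \<le> q" "q < 1"
        using that by auto
      have "eventually (\<lambda>\<beta>. 1 / (Y \<beta> 1 - Y \<beta> q) = G \<beta> q) at_top"
        using eventually_gt_v[OF q(2)] by eventually_elim (simp add: G_def)
      with tendsto_inverse_tail[OF q] show ?thesis
        by (rule Lim_transform_eventually)
    qed
  qed auto
  moreover have "eventually (\<lambda>\<beta>. integral {0..1} (G \<beta>)
      = integral {0..v \<beta>} (\<lambda>q. 1 / (Y \<beta> 1 - Y \<beta> q))) at_top"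
    using eventually_gt_at_top[of 0]
    by eventually_elim (simp only: G_def[abs_def] integral_restrict_Int domain)
  ultimately show ?thesis
    by (rule Lim_transform_eventually)
qed

lemma tendsto_ln_gap_over_beta: "((\<lambda>\<beta>. ln (1 - v \<beta>) / \<beta>) \<longlongrightarrow> 0) at_top"
proof -
  have "((\<lambda>\<beta>. ln (\<beta> * (1 - v \<beta>)) * inverse \<beta> - ln \<beta> / \<beta>) \<longlongrightarrow> ln \<delta> * 0 - 0) at_top"
    using delta_pos
    by (intro tendsto_intros delta tendsto_inverse_0_at_top filterlim_ident ln_x_over_x_tendsto_0) auto
  moreover have "eventually (\<lambda>\<beta>. ln (\<beta> * (1 - v \<beta>)) * inverse \<beta> - ln \<beta> / \<beta> = ln (1 - v \<beta>) / \<beta>) at_top"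
    using eventually_gt_at_top[of 0]
  proof eventually_elim
    case (elim \<beta>)
    then have "ln (\<beta> * (1 - v \<beta>)) = ln \<beta> + ln (1 - v \<beta>)"
      using v by (intro ln_mult_pos) auto
    with elim show ?case
      by (simp add: field_simps)
  qed
  ultimately show ?thesis
    by (simp add: Lim_transform_eventually)
qed

lemma Qbeta_over_beta_eq:
  assumes gamma: "summable (\<lambda>p. 2 ^ p * (\<gamma> p)\<^sup>2)" and "\<beta> > 0"
  shows "Qbeta \<gamma> h \<beta> (y \<beta>) / \<beta>
    = (1/2) * ((deriv (xi \<gamma>) 1 + h\<^sup>2) * Y \<beta> 1
        - integral {0..1} (\<lambda>q. deriv (deriv (xi \<gamma>)) q * Y \<beta> q))
      + (1/2) * (integral {0..v \<beta>} (\<lambda>q. 1 / (Y \<beta> 1 - Y \<beta> q)) + ln (1 - v \<beta>) / \<beta>)"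
proof -
  define E where "E = (deriv (xi \<gamma>) 1 + h\<^sup>2) * Y \<beta> 1
    - integral {0..1} (\<lambda>q. deriv (deriv (xi \<gamma>)) q * Y \<beta> q)"
  define H where "H = integral {0..v \<beta>} (\<lambda>q. 1 / (Y \<beta> 1 - Y \<beta> q))"
  have vb: "0 \<le> v \<beta>" "v \<beta> < 1" "y \<beta> (v \<beta>) = 1"
    using v \<open>\<beta> > 0\<close> by auto
  have "integral {0..1} (\<lambda>q. (\<beta>\<^sup>2 * deriv (xi \<gamma>) q + (\<beta> * h)\<^sup>2) * y \<beta> q)
      = integral {0..1} (\<lambda>q. \<beta> * ((deriv (xi \<gamma>) q + h\<^sup>2) * (\<beta> * y \<beta> q)))"
    by (rule integral_cong) (simp add: power2_eq_square algebra_simps)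
  also have "\<dots> = \<beta> * E"
    unfolding integral_mult_right E_def
    using integral_deriv_xi_mult[OF gamma scaled_integrable[OF \<open>\<beta> > 0\<close>] scaled_nonneg[OF \<open>\<beta> > 0\<close>]]
    by simp
  finally have energy: "integral {0..1} (\<lambda>q. (\<beta>\<^sup>2 * deriv (xi \<gamma>) q + (\<beta> * h)\<^sup>2) * y \<beta> q)
      = \<beta> * E" .
  have "integral {0..v \<beta>} (\<lambda>q. 1 / xhat (y \<beta>) q)
      = integral {0..v \<beta>} (\<lambda>q. \<beta> * (1 / (Y \<beta> 1 - Y \<beta> q)))"
    using Y_tail \<open>\<beta> > 0\<close> vb by (intro integral_cong) auto
  also have "\<dots> = \<beta> * H"
    unfolding H_def by (rule integral_mult_right)
  finally have entropy: "integral {0..v \<beta>} (\<lambda>q. 1 / xhat (y \<beta>) q) = \<beta> * H" .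
  have "Qbeta \<gamma> h \<beta> (y \<beta>) = (1/2) * (integral {0..1} (\<lambda>q. (\<beta>\<^sup>2 * deriv (xi \<gamma>) q + (\<beta> * h)\<^sup>2) * y \<beta> q)
      + integral {0..v \<beta>} (\<lambda>q. 1 / xhat (y \<beta>) q) + ln (1 - v \<beta>))"
    by (rule Qbeta_eq) (use yM vb \<open>\<beta> > 0\<close> in auto)
  also have "\<dots> = (1/2) * (\<beta> * E + \<beta> * H + ln (1 - v \<beta>))"
    by (simp only: energy entropy)
  also have "\<dots> / \<beta> = (1/2) * E + (1/2) * (H + ln (1 - v \<beta>) / \<beta>)"
    using \<open>\<beta> > 0\<close> by (simp add: field_simps)
  finally show ?thesis
    by (simp only: E_def H_def)
qed

end

theorem lemma5:
  fixes \<gamma> :: "nat \<Rightarrow> real" and h L \<delta> :: real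
    and y :: "real \<Rightarrow> real \<Rightarrow> real" and \<alpha> v :: "real \<Rightarrow> real"
  assumes gamma: "summable (\<lambda>p. 2 ^ p * (\<gamma> p)\<^sup>2)"
    and yM: "\<forall>\<beta>>0. inM (y \<beta>)"
    and alpha_mono: "mono_on {0..<1} \<alpha>"
    and vague: "vague_conv y \<alpha>"
    and L: "((\<lambda>\<beta>. integral {0..1} (\<lambda>s. \<beta> * y \<beta> s)) \<longlongrightarrow> L) at_top"
    and v: "\<forall>\<beta>>0. 0 \<le> v \<beta> \<and> v \<beta> < 1 \<and> y \<beta> (v \<beta>) = 1"
    and delta: "((\<lambda>\<beta>. \<beta> * (1 - v \<beta>)) \<longlongrightarrow> \<delta>) at_top" and "0 < \<delta>"
  shows "((\<lambda>\<beta>. Qbeta \<gamma> h \<beta> (y \<beta>) / \<beta>) \<longlongrightarrow>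
     (1/2) * ((deriv (xi \<gamma>) 1 + h\<^sup>2) * L
        - integral {0..1} (\<lambda>q. deriv (deriv (xi \<gamma>)) q * integral {0..q} \<alpha>)
        + integral {0..1} (\<lambda>q. 1 / (L - integral {0..q} \<alpha>)))) at_top"
proof -
  interpret vague_scaling y \<alpha> v L \<delta>
    using assms by unfold_locales
  have "((\<lambda>\<beta>. (1/2) * ((deriv (xi \<gamma>) 1 + h\<^sup>2) * Y \<beta> 1
        - integral {0..1} (\<lambda>q. deriv (deriv (xi \<gamma>)) q * Y \<beta> q))
      + (1/2) * (integral {0..v \<beta>} (\<lambda>q. 1 / (Y \<beta> 1 - Y \<beta> q)) + ln (1 - v \<beta>) / \<beta>))
    \<longlongrightarrow> (1/2) * ((deriv (xi \<gamma>) 1 + h\<^sup>2) * L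
        - integral {0..1} (\<lambda>q. deriv (deriv (xi \<gamma>)) q * integral {0..q} \<alpha>))
      + (1/2) * (integral {0..1} (\<lambda>q. 1 / (L - integral {0..q} \<alpha>)) + 0)) at_top"
    by (intro tendsto_intros L tendsto_integral_mult_Y continuous_on_deriv2_xi gamma
        tendsto_integral_inverse_tail tendsto_ln_gap_over_beta)
  then have "((\<lambda>\<beta>. Qbeta \<gamma> h \<beta> (y \<beta>) / \<beta>) \<longlongrightarrow> (1/2) * ((deriv (xi \<gamma>) 1 + h\<^sup>2) * L
        - integral {0..1} (\<lambda>q. deriv (deriv (xi \<gamma>)) q * integral {0..q} \<alpha>))
      + (1/2) * (integral {0..1} (\<lambda>q. 1 / (L - integral {0..q} \<alpha>)) + 0)) at_top"
    by (rule Lim_transform_eventually)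
       (use eventually_gt_at_top[of 0] in \<open>eventually_elim, simp add: Qbeta_over_beta_eq[OF gamma]\<close>)
  then show ?thesis
    by (simp add: algebra_simps)
qed

end
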